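(* Assume $\mu\le0$. Then the function $$v(y)=\int_0^y\Big\{\frac{\kappa_A(u)}{G\big(\kappa_A(u)/A\big)}+AF\Big(G\Big(\frac{\kappa_A(u)}{A}\Big)\Big)\Big\}\,du,\qquad 0\le y<\bar\delta_A,$$ (where the integrand at $u=0$ is defined by continuity, equal to $0$) is continuously differentiable on $[0,\bar\delta_A)$ and is a classical solution of the Hamilton–Jacobi–Bellman equation $$\kappa_A(y)+\inf_{x\ge0}\{AxF(x)-xv'(y)\}=0,\qquad y\in[0,\bar\delta_A),$$ with boundary condition $v(0)=0$; moreover the infimum is attained at $x^*=G(\kappa_A(y)/A)$.
   Context: $L$ is a one-dimensional, non-trivial Lévy process such that $L_1$ has finite second moment and the set $\{\delta<0:\mathbb E[e^{\delta L_1}]<\infty\}$ is non-empty; it has the decomposition $L_t=\mu t+\sigma W_t+\int_{\mathbb R}x\,(N(t,dx)-t\nu(dx))$ with $\mu\in\mathbb R$ the drift. Let $\bar\delta=\inf\{\delta<0:\mathbb E[e^{\delta L_1}]<\infty\}$, $A>0$, $\bar\delta_A=-\bar\delta/A$, $\kappa(x)=\ln\mathbb E[e^{xL_1}]$ and $\kappa_A(x)=\kappa(-Ax)$ for $x\in[0,\bar\delta_A)$ (when $\mu\le 0$, $\kappa_A\ge0$). $F:[0,\infty)\to[0,\infty)$ satisfies (i) $F\in C([0,\infty))\cap C^1((0,\infty))$; (ii) $F(0)=0$; (iii) $x\mapsto xF(x)$ is strictly convex on $[0,\infty)$; (iv) $x\mapsto x^2F'(x)$ is strictly increasing on $(0,\infty)$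 and tends to $\infty$ as $x\to\infty$. $G:[0,\infty)\to[0,\infty)$ is the inverse of $x\mapsto x^2F'(x)$, with $G(0)=0$. *)

theory Defs
  imports "HOL-Probability.Probability"
begin

definition strictly_convex_on :: "real set \<Rightarrow> (real \<Rightarrow> real) \<Rightarrow> bool" where
  "strictly_convex_on S f \<longleftrightarrow>
     (\<forall>x\<in>S. \<forall>y\<in>S. x \<noteq> y \<longrightarrow>
        (\<forall>u::real. 0 < u \<and> u < 1 \<longrightarrow> f ((1 - u) * x + u * y) < (1 - u) * f x + u * f y))"

definition levy_process :: "'a measure \<Rightarrow> (real \<Rightarrow> 'a \<Rightarrow> real) \<Rightarrow> bool" where
  "levy_process M L \<longleftrightarrow>
     prob_space M \<and>
     (\<forall>t\<ge>0. L t \<in> borel_measurable M) \<and>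
     (AE \<omega> in M. L 0 \<omega> = 0) \<and>
     (\<forall>s t. 0 \<le> s \<longrightarrow> s \<le> t \<longrightarrow>
        distr M borel (\<lambda>\<omega>. L t \<omega> - L s \<omega>) = distr M borel (L (t - s))) \<and>
     (\<forall>(n::nat) (ts::nat \<Rightarrow> real). 0 \<le> ts 0 \<longrightarrow> mono ts \<longrightarrow>
        prob_space.indep_vars M (\<lambda>_. borel) (\<lambda>i \<omega>. L (ts (Suc i)) \<omega> - L (ts i) \<omega>) {..<n}) \<and>
     (\<forall>t\<ge>0. \<forall>e>0. ((\<lambda>s. measure M {\<omega> \<in> space M. \<bar>L s \<omega> - L t \<omega>\<bar> > e}) \<longlongrightarrow> 0)
        (at t within {0..})) \<and>
     (AE \<omega> in M. \<forall>t\<ge>0. continuous (at t within {t..}) (\<lambda>s. L s \<omega>) \<and>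
        (0 < t \<longrightarrow> (\<exists>l. ((\<lambda>s. L s \<omega>) \<longlongrightarrow> l) (at_left t))))"

definition kappa :: "'a measure \<Rightarrow> (real \<Rightarrow> 'a \<Rightarrow> real) \<Rightarrow> real \<Rightarrow> real" where
  "kappa M L x = ln (integral\<^sup>L M (\<lambda>\<omega>. exp (x * L 1 \<omega>)))"

definition kappaA :: "'a measure \<Rightarrow> (real \<Rightarrow> 'a \<Rightarrow> real) \<Rightarrow> real \<Rightarrow> real \<Rightarrow> real" where
  "kappaA M L A x = kappa M L (- A * x)"

text \<open>delta_bar = inf {delta < 0 : E[exp(delta L_1)] < infinity}, in the extended reals
  (it may be -infinity).\<close>
definition delta_bar :: "'a measure \<Rightarrow> (real \<Rightarrow> 'a \<Rightarrow> real) \<Rightarrow> ereal" where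
  "delta_bar M L = Inf (ereal ` {\<delta>::real. \<delta> < 0 \<and> integrable M (\<lambda>\<omega>. exp (\<delta> * L 1 \<omega>))})"

text \<open>The interval [0, delta_bar_A) with delta_bar_A = - delta_bar / A, i.e.
  0 <= y and delta_bar < -A y.\<close>
definition dom_A :: "'a measure \<Rightarrow> (real \<Rightarrow> 'a \<Rightarrow> real) \<Rightarrow> real \<Rightarrow> real set" where
  "dom_A M L A = {y. 0 \<le> y \<and> delta_bar M L < ereal (- A * y)}"

end

theory Submission
  imports Defs
begin

(*
  Write the integrand as w = W o kappa_A with W(s) = s/c + A F(c), c = G(s/A), s >= 0.
  Since c^2 F'(c) = s/A, the derivative of x F(x) at c is F(c) + s/(A c) = W(s)/A, so by
  convexity of x F(x) the point x = c minimises A x F(x) - x W(s), with minimum value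
  A c F(c) - c W(s) = -s. Taking s = kappa_A(y), which is >= 0 because exp t >= 1 + t and
  E[L_1] <= 0, gives the HJB equation.
  For v to be C^1 it suffices that w is continuous. kappa_A is continuous on [0, delta_bar_A)
  by dominated convergence, and G is continuous on (0, oo) as the inverse of x^2 F'(x). At
  s = 0 the mean value theorem and monotonicity of x^2 F'(x) give c F'(c) <= 4 F(2c), so
  W(s) = A (c F'(c) + F(c)) -> 0 = W(0).
*)

lemma strictly_convex_on_imp_convex_on:
  assumes "strictly_convex_on S f" "convex S"
  shows "convex_on S f"
proof (rule convex_onI[OF _ assms(2)])
  fix t x y :: real assume "0 < t" "t < 1" "x \<in> S" "y \<in> S"
  then have "x \<noteq> y \<Longrightarrow> f ((1 - t) * x + t * y) < (1 - t) * f x + t * f y"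
    using assms(1) unfolding strictly_convex_on_def by blast
  then show "f ((1 - t) *\<^sub>R x + t *\<^sub>R y) \<le> (1 - t) * f x + t * f y"
    by (cases "x = y") (auto simp: algebra_simps)
qed

lemma at_within_eq_Icc:
  fixes D :: "real set"
  assumes "D \<subseteq> {a..}" "{a..b} \<subseteq> D" "y < b"
  shows "at y within D = at y within {a..b}"
proof (rule at_within_nhd[where S = "{..<b}"])
  show "D \<inter> {..<b} - {y} = {a..b} \<inter> {..<b} - {y}"
    using assms(1,2) by auto
qed (use assms(3) in auto)

lemma has_real_derivative_integral_within:
  fixes f :: "real \<Rightarrow> real"
  assumes f: "continuous_on D f" and D: "D \<subseteq> {a..}" "{a..b} \<subseteq> D" and y: "y \<in> D" "y < b"
  shows "((\<lambda>x. integral {a..x} f) has_real_derivative f y) (at y within D)"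
proof -
  have "((\<lambda>x. integral {a..x} f) has_vector_derivative f y) (at y within {a..b})"
    using continuous_on_subset[OF f D(2)] y D(1) by (intro integral_has_vector_derivative) auto
  moreover have "at y within D = at y within {a..b}"
    using D y(2) by (rule at_within_eq_Icc)
  ultimately show ?thesis
    by (simp add: has_real_derivative_iff_has_vector_derivative)
qed

lemma exp_mult_le_1_plus_exp:
  fixes d t l :: real
  assumes "d \<le> t" "t \<le> 0"
  shows "exp (t * l) \<le> 1 + exp (d * l)"
proof (cases "0 \<le> l")
  case True
  then have "exp (t * l) \<le> 1"
    using assms(2) by (simp add: mult_nonpos_nonneg)
  then show ?thesis
    by (smt (verit) exp_gt_zero)
next
  case False
  then have "exp (t * l) \<le> exp (d * l)"
    using assms(1) by (simp add: mult_right_mono_neg)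
  then show ?thesis
    by linarith
qed

context finite_measure
begin

lemma integrable_exp_mult:
  fixes X :: "'a \<Rightarrow> real" and d t :: real
  assumes [measurable]: "X \<in> borel_measurable M"
    and "integrable M (\<lambda>\<omega>. exp (d * X \<omega>))" "d \<le> t" "t \<le> 0"
  shows "integrable M (\<lambda>\<omega>. exp (t * X \<omega>))"
proof (rule Bochner_Integration.integrable_bound)
  show "integrable M (\<lambda>\<omega>. 1 + exp (d * X \<omega>))"
    using assms(2) by simp
  show "AE \<omega> in M. norm (exp (t * X \<omega>)) \<le> norm (1 + exp (d * X \<omega>))"
    using exp_mult_le_1_plus_exp[OF assms(3,4)] by (auto intro!: AE_I2 simp: add_nonneg_nonneg)
qed measurable

lemma continuous_on_exp_moment:
  fixes X :: "'a \<Rightarrow> real" and d :: real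
  assumes [measurable]: "X \<in> borel_measurable M"
    and d: "integrable M (\<lambda>\<omega>. exp (d * X \<omega>))"
  shows "continuous_on {d..0} (\<lambda>t. \<integral>\<omega>. exp (t * X \<omega>) \<partial>M)"
proof (rule continuous_on_sequentiallyI)
  fix u :: "nat \<Rightarrow> real" and t
  assume u: "\<forall>n. u n \<in> {d..0}" "t \<in> {d..0}" "u \<longlonglongrightarrow> t"
  show "(\<lambda>n. \<integral>\<omega>. exp (u n * X \<omega>) \<partial>M) \<longlonglongrightarrow> \<integral>\<omega>. exp (t * X \<omega>) \<partial>M"
  proof (rule integral_dominated_convergence[where w = "\<lambda>\<omega>. 1 + exp (d * X \<omega>)"])
    show "AE \<omega> in M. (\<lambda>n. exp (u n * X \<omega>)) \<longlonglongrightarrow> exp (t * X \<omega>)"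
      using u(3) by (intro AE_I2 tendsto_intros)
    show "AE \<omega> in M. norm (exp (u n * X \<omega>)) \<le> 1 + exp (d * X \<omega>)" for n
      using exp_mult_le_1_plus_exp[of d "u n"] u(1) by (intro AE_I2) auto
  qed (use d in simp_all)
qed

end

context prob_space
begin

lemma exp_moment_pos:
  fixes X :: "'a \<Rightarrow> real" and t :: real
  assumes "integrable M (\<lambda>\<omega>. exp (t * X \<omega>))"
  shows "0 < expectation (\<lambda>\<omega>. exp (t * X \<omega>))"
proof -
  have "expectation (\<lambda>\<omega>. exp (t * X \<omega>)) \<noteq> 0"
    using integral_nonneg_eq_0_iff_AE[OF assms] AE_False by simp
  moreover have "0 \<le> expectation (\<lambda>\<omega>. exp (t * X \<omega>))"
    by simp
  ultimately show ?thesis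
    by linarith
qed

lemma exp_moment_ge_1:
  fixes X :: "'a \<Rightarrow> real" and t :: real
  assumes X: "integrable M X" "expectation X \<le> 0"
    and t: "t \<le> 0" "integrable M (\<lambda>\<omega>. exp (t * X \<omega>))"
  shows "1 \<le> expectation (\<lambda>\<omega>. exp (t * X \<omega>))"
proof -
  have "1 \<le> 1 + t * expectation X"
    using X(2) t(1) by (simp add: mult_nonpos_nonpos)
  also have "\<dots> = expectation (\<lambda>\<omega>. 1 + t * X \<omega>)"
    using X(1) by (simp add: prob_space)
  also have "\<dots> \<le> expectation (\<lambda>\<omega>. exp (t * X \<omega>))"
    using X(1) t(2) by (intro integral_mono) (auto simp: exp_ge_add_one_self)
  finally show ?thesis .
qed

end

lemma levy_process_prob_space: "levy_process M L \<Longrightarrow> prob_space M"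
  unfolding levy_process_def by (rule conjunct1)

lemma levy_process_measurable: "levy_process M L \<Longrightarrow> 0 \<le> t \<Longrightarrow> L t \<in> borel_measurable M"
  unfolding levy_process_def by (drule conjunct2, drule conjunct1) simp

lemma dom_A_subset: "dom_A M L A \<subseteq> {0..}"
  by (auto simp: dom_A_def)

lemma Icc_subset_dom_A:
  assumes "0 < A" "y \<in> dom_A M L A"
  shows "{0..y} \<subseteq> dom_A M L A"
proof
  fix t assume t: "t \<in> {0..y}"
  then have "ereal (- A * y) \<le> ereal (- A * t)"
    using assms(1) by simp
  then show "t \<in> dom_A M L A"
    using assms(2) t unfolding dom_A_def by (auto intro: order_less_le_trans)
qed

lemma dom_A_right_open:
  assumes A: "0 < A" and y: "y \<in> dom_A M L A"
  obtains b where "b \<in> dom_A M L A" "y < b"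
proof -
  obtain r where r: "delta_bar M L < ereal r" "r < - A * y"
    using y ereal_dense2 unfolding dom_A_def by force
  have "0 \<le> A * y"
    using A y by (simp add: dom_A_def)
  then have "r < 0"
    using r(2) by linarith
  then have "- r / A \<in> dom_A M L A" "y < - r / A"
    using A r y by (auto simp: dom_A_def field_simps)
  then show thesis
    by (rule that)
qed

lemma integrable_exp_dom_A:
  assumes "y \<in> dom_A M L A"
  obtains d where "d \<le> - A * y" "integrable M (\<lambda>\<omega>. exp (d * L 1 \<omega>))"
  using assms unfolding dom_A_def delta_bar_def Inf_less_iff by (auto intro: less_imp_le)

lemma kappaA_nonneg:
  assumes "prob_space M" "integrable M (L 1)" "integral\<^sup>L M (L 1) \<le> 0"
    and "0 < A" "y \<in> dom_A M L A"
  shows "0 \<le> kappaA M L A y"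
proof -
  interpret prob_space M by fact
  obtain d where d: "d \<le> - A * y" "integrable M (\<lambda>\<omega>. exp (d * L 1 \<omega>))"
    using assms(5) by (rule integrable_exp_dom_A)
  have "- A * y \<le> 0"
    using assms(4,5) by (simp add: dom_A_def)
  moreover have "integrable M (\<lambda>\<omega>. exp ((- A * y) * L 1 \<omega>))"
    using borel_measurable_integrable[OF assms(2)] d(2,1) \<open>- A * y \<le> 0\<close>
    by (rule integrable_exp_mult)
  ultimately have "1 \<le> expectation (\<lambda>\<omega>. exp ((- A * y) * L 1 \<omega>))"
    using assms(2,3) by (intro exp_moment_ge_1)
  then show ?thesis
    by (simp add: kappaA_def kappa_def)
qed

lemma continuous_on_kappaA:
  assumes "prob_space M" and L1: "L 1 \<in> borel_measurable M" and A: "0 < A"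
  shows "continuous_on (dom_A M L A) (kappaA M L A)"
  unfolding continuous_on_eq_continuous_within
proof
  interpret prob_space M by fact
  fix y assume y: "y \<in> dom_A M L A"
  obtain b where b: "b \<in> dom_A M L A" "y < b"
    using A y by (rule dom_A_right_open)
  obtain d where d: "d \<le> - A * b" "integrable M (\<lambda>\<omega>. exp (d * L 1 \<omega>))"
    using b(1) by (rule integrable_exp_dom_A)
  have range: "- A * t \<in> {d..0}" if "t \<in> {0..b}" for t
  proof -
    have "A * t \<le> A * b" "0 \<le> A * t"
      using that A by (auto intro: mult_left_mono)
    then show ?thesis
      using d(1) unfolding atLeastAtMost_iff by linarith
  qed
  have "continuous_on {0..b} (\<lambda>t. - A * t)"
    by (intro continuous_intros)
  with continuous_on_exp_moment[OF L1 d(2)]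
  have "continuous_on {0..b} (\<lambda>t. \<integral>\<omega>. exp ((- A * t) * L 1 \<omega>) \<partial>M)"
    by (rule continuous_on_compose2) (use range in blast)
  moreover have "\<forall>t\<in>{0..b}. (\<integral>\<omega>. exp ((- A * t) * L 1 \<omega>) \<partial>M) \<noteq> 0"
    using range exp_moment_pos[OF integrable_exp_mult[OF L1 d(2)]] by force
  ultimately have "continuous_on {0..b} (kappaA M L A)"
    unfolding kappaA_def[abs_def] kappa_def by (rule continuous_on_ln)
  then have "continuous (at y within {0..b}) (kappaA M L A)"
    using y b(2) by (simp add: continuous_on_eq_continuous_within dom_A_def)
  moreover have "at y within dom_A M L A = at y within {0..b}"
    using dom_A_subset Icc_subset_dom_A[OF A b(1)] b(2) by (rule at_within_eq_Icc)
  ultimately show "continuous (at y within dom_A M L A) (kappaA M L A)"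
    by (simp add: continuous_within)
qed

locale impact_cost =
  fixes F G :: "real \<Rightarrow> real"
  assumes F_cont: "continuous_on {0..} F"
    and F_differentiable: "\<And>x. 0 < x \<Longrightarrow> F differentiable (at x)"
    and deriv_F_cont: "continuous_on {0<..} (deriv F)"
    and F_nonneg: "\<And>x. 0 \<le> x \<Longrightarrow> 0 \<le> F x"
    and F_0: "F 0 = 0"
    and F_conv: "strictly_convex_on {0..} (\<lambda>x. x * F x)"
    and Ginv_strict_mono: "strict_mono_on {0<..} (\<lambda>x. x\<^sup>2 * deriv F x)"
    and G_0: "G 0 = 0"
    and G_inv: "\<And>z. 0 < z \<Longrightarrow> 0 < G z \<and> (G z)\<^sup>2 * deriv F (G z) = z"
begin

definition Ginv :: "real \<Rightarrow> real" where
  "Ginv x = x\<^sup>2 * deriv F x"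

lemma F_has_deriv: "0 < x \<Longrightarrow> (F has_real_derivative deriv F x) (at x)"
  using F_differentiable DERIV_deriv_iff_real_differentiable by blast

lemma F_MVT:
  assumes "0 \<le> a" "a < b"
  obtains z where "a < z" "z < b" "F b - F a = (b - a) * deriv F z"
proof -
  have "continuous_on {a..b} F"
    by (rule continuous_on_subset[OF F_cont]) (use assms in auto)
  then obtain l z where "a < z" "z < b" "(F has_real_derivative l) (at z)" "F b - F a = (b - a) * l"
    using MVT[OF assms(2)] F_differentiable assms(1) by force
  with F_has_deriv[of z] assms(1) show thesis
    using DERIV_unique that by force
qed

lemma Ginv_less: "0 < a \<Longrightarrow> a < b \<Longrightarrow> Ginv a < Ginv b"
  using strict_mono_onD[OF Ginv_strict_mono, of a b] by (simp add: Ginv_def)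

lemma G_pos: "0 < z \<Longrightarrow> 0 < G z"
  and Ginv_G: "0 < z \<Longrightarrow> Ginv (G z) = z"
  using G_inv by (auto simp: Ginv_def)

lemma G_nonneg: "0 \<le> z \<Longrightarrow> 0 \<le> G z"
  using G_pos G_0 by (cases "z = 0") (auto intro: less_imp_le)

text \<open>If F' were negative somewhere, F would become negative by the mean value theorem.\<close>
lemma Ginv_pos:
  assumes "0 < x"
  shows "0 < Ginv x"
proof (rule ccontr)
  assume "\<not> 0 < Ginv x"
  obtain z where z: "0 < z" "z < x" "F x - F 0 = (x - 0) * deriv F z"
    using F_MVT[of 0 x] assms by auto
  have "Ginv z < 0"
    using Ginv_less[OF z(1,2)] \<open>\<not> 0 < Ginv x\<close> by simp
  then have "deriv F z < 0"
    by (simp add: Ginv_def mult_less_0_iff)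
  then have "F x < 0"
    using z assms F_0 by (simp add: mult_pos_neg)
  with F_nonneg[of x] assms show False by simp
qed

lemma Ginv_div_le:
  assumes y: "0 < y"
  shows "Ginv y / y \<le> 4 * F (2 * y)"
proof -
  obtain z where z: "y < z" "z < 2 * y" "F (2 * y) - F y = (2 * y - y) * deriv F z"
    using F_MVT[of y "2 * y"] y by auto
  have "Ginv y / (4 * y\<^sup>2) \<le> Ginv y / z\<^sup>2"
  proof (rule divide_left_mono)
    show "z\<^sup>2 \<le> 4 * y\<^sup>2"
      using power_mono[of z "2 * y" 2] z y by (simp add: power_mult_distrib)
  qed (use Ginv_pos[OF y] z y in auto)
  also have "\<dots> \<le> Ginv z / z\<^sup>2"
    using Ginv_less[OF y z(1)] by (simp add: divide_right_mono)
  also have "\<dots> = deriv F z"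
    using z y by (simp add: Ginv_def)
  finally have "y * (Ginv y / (4 * y\<^sup>2)) \<le> y * deriv F z"
    using y by (intro mult_left_mono) auto
  moreover have "y * (Ginv y / (4 * y\<^sup>2)) = Ginv y / y / 4"
    using y by (simp add: power2_eq_square field_simps)
  ultimately show ?thesis
    using F_nonneg[of y] y z(3) by simp
qed

lemma G_Ginv:
  assumes x: "0 < x"
  shows "G (Ginv x) = x"
proof -
  have Gx: "0 < G (Ginv x)" "Ginv (G (Ginv x)) = Ginv x"
    using G_pos Ginv_G Ginv_pos[OF x] by auto
  show ?thesis
    using Ginv_less[OF Gx(1), of x] Ginv_less[OF x, of "G (Ginv x)"] Gx(2)
    by (cases "G (Ginv x)" x rule: linorder_cases) auto
qed

lemma G_less:
  assumes "0 < z" "0 < x" "z < Ginv x"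
  shows "G z < x"
proof (rule ccontr)
  assume "\<not> G z < x"
  then have "Ginv x \<le> Ginv (G z)"
    using Ginv_less[OF \<open>0 < x\<close>, of "G z"] by (cases "x = G z") auto
  with assms Ginv_G show False by simp
qed

lemma isCont_Ginv: "0 < x \<Longrightarrow> isCont Ginv x"
  using deriv_F_cont unfolding Ginv_def
  by (auto intro!: continuous_intros simp: continuous_on_eq_continuous_at)

lemma isCont_G:
  assumes z: "0 < z"
  shows "isCont G z"
proof -
  have "isCont G (Ginv (G z))"
  proof (rule isCont_inverse_function[where d = "G z / 2" and f = Ginv and g = G and x = "G z"])
    have "0 < t" if "\<bar>t - G z\<bar> \<le> G z / 2" for t
      using that G_pos[OF z] by (auto simp: abs_if split: if_splits)
    then show "G (Ginv t) = t" "isCont Ginv t" if "\<bar>t - G z\<bar> \<le> G z / 2" for t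
      using that G_Ginv isCont_Ginv by auto
  qed (use G_pos[OF z] in simp)
  then show ?thesis
    using Ginv_G[OF z] by simp
qed

lemma G_tendsto_0: "filterlim G (at_right 0) (at_right 0)"
  unfolding filterlim_at
proof
  show "\<forall>\<^sub>F z in at_right 0. G z \<in> {0<..} \<and> G z \<noteq> 0"
    using G_pos by (force intro!: eventually_at_rightI[of 0 1])
  show "(G \<longlongrightarrow> 0) (at_right 0)"
  proof (rule order_tendstoI)
    show "\<forall>\<^sub>F z in at_right 0. a < G z" if "a < 0" for a :: real
      using that G_pos by (force intro!: eventually_at_rightI[of 0 1])
    show "\<forall>\<^sub>F z in at_right 0. G z < e" if "0 < e" for e :: real
      using that G_less Ginv_pos by (auto intro!: eventually_at_rightI[of 0 "Ginv e"])
  qed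
qed

text \<open>hjb_slope A (kappa_A y) is the integrand w(y) = v'(y) of the theorem.\<close>
definition hjb_slope :: "real \<Rightarrow> real \<Rightarrow> real" where
  "hjb_slope A s = s / G (s / A) + A * F (G (s / A))"

lemma hjb_slope_0: "hjb_slope A 0 = 0"
  by (simp add: hjb_slope_def G_0 F_0)

lemma F_tendsto_0: "(F \<longlongrightarrow> 0) (at_right 0)"
proof -
  have "(F \<longlongrightarrow> F 0) (at 0 within {0..})"
    using F_cont by (simp add: continuous_on_def)
  then show ?thesis
    using F_0 by (simp add: at_within_Ici_at_right)
qed

lemma Ginv_div_plus_F_tendsto_0: "((\<lambda>c. Ginv c / c + F c) \<longlongrightarrow> 0) (at_right 0)"
proof (rule tendsto_sandwich[where f = "\<lambda>_. 0" and h = "\<lambda>c. 4 * F (2 * c) + F c"])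
  have "filterlim (\<lambda>c::real. 2 * c) (at_right 0) (at_right 0)"
    by (rule filterlim_times_pos[OF filterlim_ident]) simp_all
  then have "((\<lambda>c. F (2 * c)) \<longlongrightarrow> 0) (at_right 0)"
    by (rule filterlim_compose[OF F_tendsto_0])
  from tendsto_add[OF tendsto_mult_right_zero[OF this, of 4] F_tendsto_0]
  show "((\<lambda>c. 4 * F (2 * c) + F c) \<longlongrightarrow> 0) (at_right 0)"
    by simp
  show "\<forall>\<^sub>F c in at_right 0. Ginv c / c + F c \<le> 4 * F (2 * c) + F c"
    using Ginv_div_le by (auto intro!: eventually_at_rightI[of 0 1])
  show "\<forall>\<^sub>F c in at_right 0. 0 \<le> Ginv c / c + F c"
    using Ginv_pos F_nonneg
    by (auto intro!: eventually_at_rightI[of 0 1] add_nonneg_nonneg divide_nonneg_pos simp: less_imp_le)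
qed simp

lemma hjb_slope_tendsto_0:
  assumes A: "0 < A"
  shows "(hjb_slope A \<longlongrightarrow> 0) (at_right 0)"
proof -
  have "((\<lambda>z. Ginv (G z) / G z + F (G z)) \<longlongrightarrow> 0) (at_right 0)"
    by (rule filterlim_compose[OF Ginv_div_plus_F_tendsto_0 G_tendsto_0])
  then have "((\<lambda>z. z / G z + F (G z)) \<longlongrightarrow> 0) (at_right 0)"
    by (rule tendsto_cong[THEN iffD1, rotated]) (auto simp: Ginv_G intro!: eventually_at_rightI[of 0 1])
  moreover have "filterlim (\<lambda>s. inverse A * s) (at_right 0) (at_right 0)"
    using A by (intro filterlim_times_pos[OF filterlim_ident]) simp_all
  then have "filterlim (\<lambda>s. s / A) (at_right 0) (at_right 0)"
    by (simp add: divide_inverse mult.commute)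
  ultimately have "((\<lambda>s. s / A / G (s / A) + F (G (s / A))) \<longlongrightarrow> 0) (at_right 0)"
    by (rule filterlim_compose)
  then have "((\<lambda>s. A * (s / A / G (s / A) + F (G (s / A)))) \<longlongrightarrow> A * 0) (at_right 0)"
    by (rule tendsto_mult_left)
  then show ?thesis
    using A by (simp add: hjb_slope_def[abs_def] distrib_left)
qed

lemma continuous_on_hjb_slope:
  assumes A: "0 < A"
  shows "continuous_on {0..} (hjb_slope A)"
  unfolding continuous_on_eq_continuous_within
proof
  fix s :: real assume "s \<in> {0..}"
  then consider "s = 0" | "0 < s" by fastforce
  then show "continuous (at s within {0..}) (hjb_slope A)"
  proof cases
    case 1
    then show ?thesis
      using hjb_slope_tendsto_0[OF A] by (simp add: continuous_within at_within_Ici_at_right hjb_slope_0)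
  next
    case 2
    then have sA: "0 < s / A" using A by simp
    have "isCont (\<lambda>s. s / A) s"
      using A by (intro continuous_intros) simp
    from isCont_o2[OF this isCont_G[OF sA]]
    have G_cont: "isCont (\<lambda>s. G (s / A)) s" .
    have "isCont F (G (s / A))"
      using F_differentiable[OF G_pos[OF sA]] by (rule differentiable_imp_continuous_within)
    with G_cont have "isCont (\<lambda>s. F (G (s / A))) s"
      by (rule isCont_o2)
    with G_cont have "isCont (hjb_slope A) s"
      unfolding hjb_slope_def[abs_def] using G_pos[OF sA] by (intro continuous_intros) auto
    then show ?thesis
      by (rule continuous_at_imp_continuous_at_within)
  qed
qed

text \<open>At c = G (s / A) the function x F(x) has slope F c + Ginv c / c = hjb_slope A s / A, so
  the minimum comes from the tangent line at c.\<close>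
lemma hjb_slope_minimizer:
  assumes A: "0 < A" and s: "0 \<le> s"
  defines "c \<equiv> G (s / A)"
  shows "A * c * F c - c * hjb_slope A s = - s"
    and "0 \<le> x \<Longrightarrow> A * c * F c - c * hjb_slope A s \<le> A * x * F x - x * hjb_slope A s"
proof -
  consider "s = 0" | "0 < s" using s by fastforce
  then have "A * c * F c - c * hjb_slope A s = - s
      \<and> (0 \<le> x \<longrightarrow> A * c * F c - c * hjb_slope A s \<le> A * x * F x - x * hjb_slope A s)"
  proof cases
    case 1
    then show ?thesis
      using A F_nonneg by (simp add: c_def G_0 F_0 hjb_slope_0)
  next
    case 2
    then have c: "0 < c" "Ginv c = s / A"
      using A by (auto simp: c_def G_pos Ginv_G)
    have slope: "hjb_slope A s = A * (F c + Ginv c / c)"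
      using c A by (simp add: hjb_slope_def c_def[symmetric] field_simps)
    have "((\<lambda>x. x * F x) has_real_derivative F c + Ginv c / c) (at c within {0..})"
      using DERIV_mult[OF DERIV_ident F_has_deriv[OF c(1)]] c(1)
      by (auto simp: Ginv_def power2_eq_square mult.commute intro: has_field_derivative_at_within)
    from convex_on_imp_above_tangent[OF strictly_convex_on_imp_convex_on[OF F_conv] _ _ _ this]
    have tangent: "(F c + Ginv c / c) * (x - c) \<le> x * F x - c * F c" if "0 \<le> x"
      using c(1) that by auto
    show ?thesis
      using c A mult_left_mono[OF tangent, of A] by (auto simp: slope field_simps)
  qed
  then show "A * c * F c - c * hjb_slope A s = - s"
    and "0 \<le> x \<Longrightarrow> A * c * F c - c * hjb_slope A s \<le> A * x * F x - x * hjb_slope A s"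
    by auto
qed

lemma Inf_hjb_slope:
  assumes A: "0 < A" and s: "0 \<le> s"
  shows "(INF x\<in>{0..}. A * x * F x - x * hjb_slope A s) = - s"
proof (rule cInf_eq_minimum)
  show "- s \<in> (\<lambda>x. A * x * F x - x * hjb_slope A s) ` {0..}"
    using hjb_slope_minimizer(1)[OF A s] G_nonneg[of "s / A"] A s
    by (intro image_eqI[of _ _ "G (s / A)"]) auto
  show "- s \<le> y" if "y \<in> (\<lambda>x. A * x * F x - x * hjb_slope A s) ` {0..}" for y
    using that hjb_slope_minimizer[OF A s] by fastforce
qed

end

theorem mainTheorem8:
  fixes M :: "'a measure" and L :: "real \<Rightarrow> 'a \<Rightarrow> real"
    and A :: real and F G :: "real \<Rightarrow> real"
  assumes levy: "levy_process M L"
    and nontrivial: "\<not> (\<forall>t\<ge>0. AE \<omega> in M. L t \<omega> = 0)"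
    and second_moment: "integrable M (\<lambda>\<omega>. (L 1 \<omega>)\<^sup>2)"
    and exp_moment: "\<exists>\<delta><0. integrable M (\<lambda>\<omega>. exp (\<delta> * L 1 \<omega>))"
    and A_pos: "A > 0"
    and drift_nonpos: "integral\<^sup>L M (L 1) \<le> 0"
    and F_cont: "continuous_on {0..} F"
    and F_C1: "\<forall>x>0. F differentiable (at x)" "continuous_on {0<..} (deriv F)"
    and F_nonneg: "\<forall>x\<ge>0. F x \<ge> 0"
    and F_0: "F 0 = 0"
    and F_conv: "strictly_convex_on {0..} (\<lambda>x. x * F x)"
    and F_mono: "strict_mono_on {0<..} (\<lambda>x. x\<^sup>2 * deriv F x)"
    and F_lim: "filterlim (\<lambda>x. x\<^sup>2 * deriv F x) at_top at_top"
    and G_0: "G 0 = 0"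
    and G_inv: "\<forall>z>0. G z > 0 \<and> (G z)\<^sup>2 * deriv F (G z) = z"
  shows
    "let D = dom_A M L A;
         k = kappaA M L A;
         w = (\<lambda>u. k u / G (k u / A) + A * F (G (k u / A)));
         v = (\<lambda>y. integral {0..y} w)
     in (\<forall>y\<in>D. (v has_real_derivative w y) (at y within D))
        \<and> continuous_on D w
        \<and> v 0 = 0
        \<and> (\<forall>y\<in>D. k y + (INF x\<in>{0..}. A * x * F x - x * w y) = 0)
        \<and> (\<forall>y\<in>D. \<forall>x\<ge>0. A * G (k y / A) * F (G (k y / A)) - G (k y / A) * w y
                           \<le> A * x * F x - x * w y)"
proof -
  interpret prob_space M
    using levy by (rule levy_process_prob_space)
  have L1: "L 1 \<in> borel_measurable M"
    using levy by (rule levy_process_measurable) simp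
  interpret impact_cost F G
    using F_cont F_C1 F_nonneg F_0 F_conv F_mono G_0 G_inv by unfold_locales simp_all
  define D where "D = dom_A M L A"
  define k where "k = kappaA M L A"
  have k_nonneg: "0 \<le> k y" if "y \<in> D" for y
    using prob_space_axioms square_integrable_imp_integrable[OF L1 second_moment] drift_nonpos A_pos that
    unfolding D_def k_def by (rule kappaA_nonneg)
  have w_cont: "continuous_on D (\<lambda>y. hjb_slope A (k y))"
    unfolding D_def k_def
    using continuous_on_hjb_slope[OF A_pos] continuous_on_kappaA[where L = L, OF prob_space_axioms L1 A_pos]
    by (rule continuous_on_compose2) (use k_nonneg in \<open>auto simp: D_def k_def\<close>)
  have v_deriv: "((\<lambda>y. integral {0..y} (\<lambda>u. hjb_slope A (k u))) has_real_derivative hjb_slope A (k y))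
      (at y within D)" if y: "y \<in> D" for y
  proof -
    obtain b where b: "b \<in> D" "y < b"
      using A_pos y unfolding D_def by (rule dom_A_right_open)
    show ?thesis
      using w_cont dom_A_subset Icc_subset_dom_A[OF A_pos b(1)[unfolded D_def]] y b(2)
      unfolding D_def by (rule has_real_derivative_integral_within)
  qed
  have w_eq: "k u / G (k u / A) + A * F (G (k u / A)) = hjb_slope A (k u)" for u
    by (simp add: hjb_slope_def)
  show ?thesis
    unfolding Let_def D_def[symmetric] k_def[symmetric] w_eq
    using w_cont v_deriv Inf_hjb_slope[OF A_pos k_nonneg] hjb_slope_minimizer(2)[OF A_pos k_nonneg]
    by simp
qed

end
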